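(* Fix $\varepsilon>0$, $\beta\in(0,1)$, an even integer $d>4(e^{2\varepsilon}-1)^2\ln\frac2\beta$, and $\varepsilon$-private randomizers $R_1,\dots,R_n:[d]\to\mathcal Y$. Let $v=(e^{2\varepsilon}-1)\sqrt{\frac4d\ln\frac2\beta}$. If $H$ is chosen uniformly among subsets of $[d]$ of size $d/2$, then with probability at least $5/6$ over $H$, both of the following hold: \[ \forall i\in[n]:\ \Pr\left[R_i(\mathbf U)\in\mathit{Leak}(v,H,R_i)\right]<6\beta n,\qquad \forall i\in[n]:\ \Pr\left[R_i(\mathbf U_H)\in\mathit{Leak}(v,H,R_i)\right]<6e^{\varepsilon}\beta n . \]
   Context: $\mathcal Y$ is a countable message set. A randomizer $R:[d]\to\mathcal Y$ is $\varepsilon$-private if for all $x,x'\in[d]$ and all $Y\subseteq\mathcal Y$, $\Pr[R(x)\in Y]\le e^{\varepsilon}\Pr[R(x')\in Y]$. $\mathbf U$ is the uniform distribution on $[d]$; for $H\subseteq[d]$, $\mathbf U_H$ is the uniform distribution on $H$; $R(\mathbf U)$, $R(\mathbf U_H)$ are the distributions of $R(\hat x)$ for $\hat x\sim\mathbf U$, resp. $\hat x\sim\mathbf U_H$. For $H\subset[d]$ with $|H|=d/2$, a message $y$ is $v$-leaky with respect to $H,R$ if $\left|\ln\frac{\Pr[R(\mathbf U_H)=y]}{\Pr[R(\mathbf U)=y]}\right|>v$ (messages with $\Pr[R(\mathbf U)=y]=0$ are regarded as not leaky), and $\mathit{Leak}(v,H,R)$ is the set of $y\in\mathcal Y$ that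 are $v$-leaky with respect to $H,R$. *)

theory Defs
  imports "HOL-Probability.Probability"
begin

definition private_randomizer :: "real \<Rightarrow> nat \<Rightarrow> (nat \<Rightarrow> 'y::countable pmf) \<Rightarrow> bool" where
  "private_randomizer eps d R \<longleftrightarrow>
     (\<forall>x\<in>{1..d}. \<forall>x'\<in>{1..d}. \<forall>Y.
        measure_pmf.prob (R x) Y \<le> exp eps * measure_pmf.prob (R x') Y)"

text \<open>R(U) and R(U_H): output distribution on a uniformly random input.\<close>
definition rand_out :: "nat set \<Rightarrow> (nat \<Rightarrow> 'y pmf) \<Rightarrow> 'y pmf" where
  "rand_out S R = bind_pmf (pmf_of_set S) R"

text \<open>v-leaky messages. Since ln 0 is the junk value 0 in Isabelle, the case
  Pr[R(U_H)=y] = 0 < Pr[R(U)=y] (log ratio = -infinity) is treated as leaky explicitly.\<close>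
definition Leak :: "real \<Rightarrow> nat \<Rightarrow> nat set \<Rightarrow> (nat \<Rightarrow> 'y pmf) \<Rightarrow> 'y set" where
  "Leak v d H R = {y. pmf (rand_out {1..d} R) y \<noteq> 0 \<and>
      (pmf (rand_out H R) y = 0 \<or>
       \<bar>ln (pmf (rand_out H R) y / pmf (rand_out {1..d} R) y)\<bar> > v)}"

end

theory Submission
  imports Defs
begin

text \<open>Fix a message y with Pr[R(U) = y] > 0. By privacy the weights
  a x = Pr[R(x) = y] / Pr[R(U) = y] lie in [e^-eps, e^eps] and sum to d over [d], and
  y can be v-leaky for H only if the weights over H sum to d/2 up to an error of at
  least d v / 4. A uniformly random half H is obtained by pairing up a uniformly
  random ordering of [d] and keeping one element of each pair by a fair coin; given
  the ordering, the sum over H is then a sum of d/2 independent bounded terms, so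
  Hoeffding's inequality and the choice of v show that y is leaky with probability at
  most beta. By Fubini the expected R_i(U)-mass of the leaky messages is at most beta,
  and Markov's inequality with a union bound over the n randomizers yields the first
  claim with probability 5/6. The second follows from it, since privacy gives
  Pr[R(U_H) \<in> Y] \<le> e^eps Pr[R(U) \<in> Y] for every set Y.\<close>

section \<open>Uniformly random halves\<close>

definition pair_choice :: "nat \<Rightarrow> 'a list \<Rightarrow> (nat \<Rightarrow> bool) \<Rightarrow> 'a set" where
  "pair_choice k xs c = (\<lambda>j. xs ! (2 * j + of_bool (c j))) ` {..<k}"

lemma inj_on_pair_choice:
  assumes "distinct xs" "length xs = 2 * k"
  shows "inj_on (\<lambda>j. xs ! (2 * j + of_bool (c j))) {..<k}"
proof (rule inj_onI)
  fix i j
  assume "i \<in> {..<k}" "j \<in> {..<k}" "xs ! (2 * i + of_bool (c i)) = xs ! (2 * j + of_bool (c j))"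
  then have "2 * i + of_bool (c i) = 2 * j + (of_bool (c j) :: nat)"
    using assms by (subst (asm) nth_eq_iff_index_eq) auto
  then show "i = j"
    by (cases "c i"; cases "c j") auto
qed

lemma pair_choice_subset_card:
  assumes "xs \<in> permutations_of_set A" "card A = 2 * k"
  shows "pair_choice k xs c \<subseteq> A" "card (pair_choice k xs c) = k"
proof -
  have "distinct xs" "set xs = A" "length xs = 2 * k"
    using assms length_finite_permutations_of_set[OF assms(1)] by (auto simp: permutations_of_set_def)
  then show "pair_choice k xs c \<subseteq> A" "card (pair_choice k xs c) = k"
    using inj_on_pair_choice[of xs k c] unfolding pair_choice_def by (auto simp: card_image)
qed

lemma pair_choice_map:
  "length xs = 2 * k \<Longrightarrow> pair_choice k (map \<tau> xs) c = \<tau> ` pair_choice k xs c"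
  unfolding pair_choice_def image_image by (intro image_cong) auto

lemma map_pmf_permutations_of_set_bij:
  assumes "bij_betw \<tau> A A" "finite A"
  shows "map_pmf (map \<tau>) (pmf_of_set (permutations_of_set A)) = pmf_of_set (permutations_of_set A)"
proof -
  have inj: "inj_on \<tau> A" and img: "\<tau> ` A = A"
    using assms(1) by (auto simp: bij_betw_def)
  have "inj_on (map \<tau>) (permutations_of_set A)"
  proof (rule inj_onI)
    fix xs ys assume "xs \<in> permutations_of_set A" "ys \<in> permutations_of_set A" "map \<tau> xs = map \<tau> ys"
    then show "xs = ys"
      using inj by (auto simp: permutations_of_set_def inj_on_map_eq_map)
  qed
  moreover have "map \<tau> ` permutations_of_set A = permutations_of_set A"
    using permutations_of_set_image_inj[OF inj] img by simp
  ultimately show ?thesis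
    using assms(2) by (simp add: map_pmf_of_set_inj permutations_of_set_nonempty)
qed

lemma obtain_bij_betw_image:
  assumes "finite A" "H \<subseteq> A" "H' \<subseteq> A" "card H = card H'"
  obtains \<tau> where "bij_betw \<tau> A A" "\<tau> ` H = H'"
proof -
  have fin: "finite H" "finite H'"
    using assms(1-3) finite_subset by auto
  obtain f where f: "bij_betw f H H'"
    using finite_same_card_bij[OF fin assms(4)] by blast
  have "card (A - H) = card (A - H')"
    using assms by (simp add: card_Diff_subset fin)
  then obtain g where g: "bij_betw g (A - H) (A - H')"
    using finite_same_card_bij assms(1) by (metis finite_Diff)
  define \<tau> where "\<tau> x = (if x \<in> H then f x else g x)" for x
  have "bij_betw \<tau> H H'" "bij_betw \<tau> (A - H) (A - H')"
    using f g bij_betw_cong[of H \<tau> f H'] bij_betw_cong[of "A - H" \<tau> g "A - H'"]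
    by (simp_all add: \<tau>_def)
  then have "bij_betw \<tau> (H \<union> (A - H)) (H' \<union> (A - H'))"
    by (rule bij_betw_combine) blast
  moreover have "H \<union> (A - H) = A" "H' \<union> (A - H') = A"
    using assms(2,3) by blast+
  ultimately show ?thesis
    using that \<open>bij_betw \<tau> H H'\<close> by (simp add: bij_betw_def)
qed

lemma pmf_of_set_eqI:
  assumes "finite S" "S \<noteq> {}" "set_pmf p \<subseteq> S"
    and "\<And>x y. x \<in> S \<Longrightarrow> y \<in> S \<Longrightarrow> pmf p x \<le> pmf p y"
  shows "p = pmf_of_set S"
proof (rule pmf_eqI)
  obtain x0 where x0: "x0 \<in> S"
    using assms(2) by blast
  have const: "pmf p x = pmf p x0" if "x \<in> S" for x
    using assms(4)[OF that x0] assms(4)[OF x0 that] by linarith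
  have "1 = (\<Sum>x\<in>S. pmf p x)"
    using sum_pmf_eq_1[OF assms(1,3)] by simp
  also have "\<dots> = card S * pmf p x0"
    using const by simp
  finally have x0_val: "pmf p x0 = 1 / card S"
    using assms(1,2) by (simp add: field_simps)
  fix x
  show "pmf p x = pmf (pmf_of_set S) x"
    using const x0_val assms(1,2,3) by (cases "x \<in> S") (auto simp: set_pmf_iff)
qed

lemma pmf_le_pmf_map: "pmf p x \<le> pmf (map_pmf f p) (f x)"
proof -
  have "measure p {x} \<le> measure p (f -` {f x})"
    by (intro measure_pmf.finite_measure_mono) auto
  then show ?thesis
    by (simp add: pmf_map measure_pmf_single)
qed

lemma pair_choice_uniform:
  assumes "finite A" "card A = 2 * k"
  shows "map_pmf (\<lambda>xs. pair_choice k xs c) (pmf_of_set (permutations_of_set A))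
           = pmf_of_set {H. H \<subseteq> A \<and> card H = k}"
    (is "?p = pmf_of_set ?S")
proof (rule pmf_of_set_eqI)
  show "finite ?S"
    using assms(1) by (auto intro: finite_subset[of _ "Pow A"])
  show sub: "set_pmf ?p \<subseteq> ?S"
    using assms pair_choice_subset_card by (fastforce simp: permutations_of_set_nonempty)
  then show "?S \<noteq> {}"
    by (metis set_pmf_not_empty subset_empty)
  fix H H' assume "H \<in> ?S" "H' \<in> ?S"
  then obtain \<tau> where \<tau>: "bij_betw \<tau> A A" "\<tau> ` H = H'"
    using obtain_bij_betw_image[OF assms(1), of H H'] by auto
  \<comment> \<open>The law of the chosen half is invariant under every bijection of A.\<close>
  have "map_pmf ((`) \<tau>) ?p = map_pmf (\<lambda>xs. pair_choice k xs c)
          (map_pmf (map \<tau>) (pmf_of_set (permutations_of_set A)))"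
    unfolding map_pmf_comp using assms
    by (intro map_pmf_cong) (auto simp: pair_choice_map length_finite_permutations_of_set
        permutations_of_set_nonempty)
  also have "\<dots> = ?p"
    by (simp add: map_pmf_permutations_of_set_bij[OF \<tau>(1) assms(1)])
  finally have "map_pmf ((`) \<tau>) ?p = ?p" .
  then show "pmf ?p H \<le> pmf ?p H'"
    using pmf_le_pmf_map[of ?p H "(`) \<tau>"] \<tau>(2) by simp
qed

lemma sum_lessThan_double:
  fixes g :: "nat \<Rightarrow> 'a::comm_monoid_add"
  shows "(\<Sum>i<2 * k. g i) = (\<Sum>j<k. g (2 * j) + g (2 * j + 1))"
  by (induction k) (simp_all add: sum.lessThan_Suc ac_simps)

lemma sum_pair_choice_deviation:
  fixes a :: "'a \<Rightarrow> real"
  assumes "xs \<in> permutations_of_set A" "card A = 2 * k"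
  shows "(\<Sum>x\<in>pair_choice k xs c. a x) - (\<Sum>x\<in>A. a x) / 2
           = (\<Sum>j<k. a (xs ! (2 * j + of_bool (c j))) - (a (xs ! (2 * j)) + a (xs ! (2 * j + 1))) / 2)"
proof -
  have xs: "distinct xs" "set xs = A" "length xs = 2 * k"
    using assms length_finite_permutations_of_set[OF assms(1)] by (auto simp: permutations_of_set_def)
  have "(\<Sum>x\<in>pair_choice k xs c. a x) = (\<Sum>j<k. a (xs ! (2 * j + of_bool (c j))))"
    unfolding pair_choice_def using inj_on_pair_choice[OF xs(1,3)] by (simp add: sum.reindex)
  moreover have "(\<Sum>x\<in>A. a x) = (\<Sum>i<2 * k. a (xs ! i))"
  proof -
    have "A = (!) xs ` {..<2 * k}" and "inj_on ((!) xs) {..<2 * k}"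
      using xs by (auto simp: set_conv_nth inj_on_def nth_eq_iff_index_eq)
    then show ?thesis
      by (simp add: sum.reindex)
  qed
  ultimately show ?thesis
    by (simp add: sum_lessThan_double sum_subtractf sum_divide_distrib)
qed

lemma pair_choice_hoeffding:
  fixes a :: "'a \<Rightarrow> real"
  assumes xs: "xs \<in> permutations_of_set A" and card: "card A = 2 * k" and "k > 0"
    and range: "\<forall>x\<in>A. a x \<in> {L..U}" and "L < U" and "s \<ge> 0"
  shows "measure_pmf.prob (Pi_pmf {..<k} False (\<lambda>_. bernoulli_pmf (1/2)))
           {c. \<bar>(\<Sum>x\<in>pair_choice k xs c. a x) - (\<Sum>x\<in>A. a x) / 2\<bar> \<ge> s}
         \<le> 2 * exp (- 2 * s\<^sup>2 / (real k * (U - L)\<^sup>2))"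
proof -
  define M where "M = Pi_pmf {..<k} False (\<lambda>_. bernoulli_pmf (1/2))"
  define Y where "Y j b = a (xs ! (2 * j + of_bool b)) - (a (xs ! (2 * j)) + a (xs ! (2 * j + 1))) / 2"
    for j b
  have "set xs = A" "length xs = 2 * k"
    using xs length_finite_permutations_of_set[OF xs] card by (auto simp: permutations_of_set_def)
  then have a_nth: "a (xs ! i) \<in> {L..U}" if "i < 2 * k" for i
    using range that by auto
  have Y_range: "Y j b \<in> {-(U - L) / 2..(U - L) / 2}" if "j < k" for j b
    using a_nth[of "2 * j"] a_nth[of "2 * j + 1"] that
    by (cases b) (auto simp: Y_def field_simps)
  have Y_centred: "measure_pmf.expectation M (\<lambda>c. Y j (c j)) = 0" if "j < k" for j
  proof -
    have "map_pmf (\<lambda>c. c j) M = bernoulli_pmf (1/2)"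
      unfolding M_def using that by (simp add: Pi_pmf_component)
    then have "measure_pmf.expectation M (\<lambda>c. Y j (c j))
                 = measure_pmf.expectation (bernoulli_pmf (1/2)) (Y j)"
      by (metis integral_map_pmf)
    then show ?thesis
      by (simp add: Y_def field_simps)
  qed
  interpret Hoeffding_ineq "measure_pmf M" "{..<k}" "\<lambda>j c. Y j (c j)"
      "\<lambda>_. -(U - L) / 2" "\<lambda>_. (U - L) / 2" 0
  proof unfold_locales
    show "prob_space.indep_vars (measure_pmf M) (\<lambda>_. borel) (\<lambda>j c. Y j (c j)) {..<k}"
      unfolding M_def
      by (intro prob_space.indep_vars_compose2[OF _ indep_vars_Pi_pmf])
         (auto simp: measure_pmf.prob_space_axioms)
  qed (use Y_range Y_centred in simp_all)
  have "(\<Sum>j<k. ((U - L) / 2 - (-(U - L) / 2))\<^sup>2) = real k * (U - L)\<^sup>2"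
    by (simp add: power2_eq_square algebra_simps)
  then have "measure_pmf.prob M {c. \<bar>(\<Sum>j<k. Y j (c j)) - 0\<bar> \<ge> s}
               \<le> 2 * exp (-2 * s\<^sup>2 / (real k * (U - L)\<^sup>2))"
    using Hoeffding_ineq_abs_ge[OF \<open>s \<ge> 0\<close>] \<open>L < U\<close> \<open>k > 0\<close>
    by (simp add: power2_eq_square)
  then show ?thesis
    unfolding M_def[symmetric] sum_pair_choice_deviation[OF xs card] Y_def[symmetric]
    by simp
qed

lemma measure_pmf_bind_le:
  assumes "\<And>x. x \<in> set_pmf p \<Longrightarrow> measure_pmf.prob (f x) E \<le> b" "b \<ge> 0"
  shows "measure_pmf.prob (bind_pmf p f) E \<le> b"
proof -
  have "emeasure (measure_pmf (bind_pmf p f)) E = (\<integral>\<^sup>+x. emeasure (measure_pmf (f x)) E \<partial>measure_pmf p)"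
    by simp
  also have "\<dots> \<le> (\<integral>\<^sup>+x. ennreal b \<partial>measure_pmf p)"
    by (intro nn_integral_mono_AE)
       (auto simp: AE_measure_pmf_iff measure_pmf.emeasure_eq_measure intro!: ennreal_leI assms(1))
  finally show ?thesis
    using assms(2) by (simp add: measure_pmf.emeasure_eq_measure)
qed

lemma half_subset_sum_concentration:
  fixes a :: "'a \<Rightarrow> real"
  assumes "finite A" "card A = 2 * k" "k > 0"
    and "\<forall>x\<in>A. a x \<in> {L..U}" "L < U" "s \<ge> 0"
  shows "measure_pmf.prob (pmf_of_set {H. H \<subseteq> A \<and> card H = k})
           {H. \<bar>(\<Sum>x\<in>H. a x) - (\<Sum>x\<in>A. a x) / 2\<bar> \<ge> s}
         \<le> 2 * exp (- 2 * s\<^sup>2 / (real k * (U - L)\<^sup>2))"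
proof -
  define P where "P = pmf_of_set (permutations_of_set A)"
  define M where "M = Pi_pmf {..<k} False (\<lambda>_. bernoulli_pmf (1/2))"
  have "pmf_of_set {H. H \<subseteq> A \<and> card H = k} = bind_pmf M (\<lambda>c. map_pmf (\<lambda>xs. pair_choice k xs c) P)"
    unfolding P_def by (simp add: pair_choice_uniform assms(1,2))
  also have "\<dots> = bind_pmf P (\<lambda>xs. map_pmf (\<lambda>c. pair_choice k xs c) M)"
    unfolding map_pmf_def by (rule bind_commute_pmf)
  finally show ?thesis
    using pair_choice_hoeffding[OF _ assms(2-6)] assms(1)
    by (auto intro!: measure_pmf_bind_le simp: P_def M_def permutations_of_set_nonempty)
qed

section \<open>Output distributions on random inputs\<close>

lemma average_le_average:
  fixes f g :: "'a \<Rightarrow> real"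
  assumes "finite S" "S \<noteq> {}" "finite T" "T \<noteq> {}"
    and "\<And>x x'. x \<in> S \<Longrightarrow> x' \<in> T \<Longrightarrow> f x \<le> g x'"
  shows "(\<Sum>x\<in>S. f x) / card S \<le> (\<Sum>x\<in>T. g x) / card T"
proof -
  have "(\<Sum>x\<in>S. f x) / card S \<le> g x'" if "x' \<in> T" for x'
    using sum_bounded_above[of S f "g x'"] assms(1,2,5) that
    by (simp add: pos_divide_le_eq card_gt_0_iff mult.commute)
  then have "card T * ((\<Sum>x\<in>S. f x) / card S) \<le> (\<Sum>x\<in>T. g x)"
    using sum_bounded_below[of T "(\<Sum>x\<in>S. f x) / card S" g] by simp
  then show ?thesis
    using assms(3,4) by (simp add: le_divide_eq card_gt_0_iff mult.commute)
qed

lemma pmf_rand_out: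
  "finite S \<Longrightarrow> S \<noteq> {} \<Longrightarrow> pmf (rand_out S R) y = (\<Sum>x\<in>S. pmf (R x) y) / card S"
  unfolding rand_out_def by (rule pmf_bind_pmf_of_set)

lemma measure_rand_out:
  assumes "finite S" "S \<noteq> {}"
  shows "measure_pmf.prob (rand_out S R) Y = (\<Sum>x\<in>S. measure_pmf.prob (R x) Y) / card S"
proof -
  have "emeasure (measure_pmf (rand_out S R)) Y
          = (\<integral>\<^sup>+x. emeasure (measure_pmf (R x)) Y \<partial>measure_pmf (pmf_of_set S))"
    unfolding rand_out_def by simp
  also have "\<dots> = (\<Sum>x\<in>S. ennreal (measure_pmf.prob (R x) Y)) / ennreal (card S)"
    using assms
    by (simp add: nn_integral_pmf_of_set measure_pmf.emeasure_eq_measure ennreal_of_nat_eq_real_of_nat)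
  also have "\<dots> = ennreal ((\<Sum>x\<in>S. measure_pmf.prob (R x) Y) / card S)"
    using assms by (subst sum_ennreal) (auto intro!: divide_ennreal sum_nonneg)
  finally show ?thesis
    by (simp add: measure_pmf.emeasure_eq_measure divide_nonneg_nonneg sum_nonneg)
qed

lemma measure_rand_out_subset_le:
  assumes "private_randomizer eps d R" "S \<subseteq> {1..d}" "S \<noteq> {}"
  shows "measure_pmf.prob (rand_out S R) Y \<le> exp eps * measure_pmf.prob (rand_out {1..d} R) Y"
proof -
  have "finite S" "{1..d} \<noteq> {}"
    using assms(2,3) finite_subset by auto
  moreover have "(\<Sum>x\<in>S. measure_pmf.prob (R x) Y) / card S
                   \<le> (\<Sum>x\<in>{1..d}. exp eps * measure_pmf.prob (R x) Y) / card {1..d}"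
    using assms calculation unfolding private_randomizer_def
    by (intro average_le_average) auto
  ultimately show ?thesis
    using assms(3) by (simp add: measure_rand_out sum_distrib_left[symmetric])
qed

lemma private_randomizer_pmf_rand_out:
  assumes "private_randomizer eps d R" "x \<in> {1..d}"
  shows "pmf (R x) y \<le> exp eps * pmf (rand_out {1..d} R) y"
    and "pmf (rand_out {1..d} R) y \<le> exp eps * pmf (R x) y"
proof -
  have single: "pmf (R x) y \<le> exp eps * pmf (R x') y" "pmf (R x') y \<le> exp eps * pmf (R x) y"
    if "x' \<in> {1..d}" for x'
    using assms that unfolding private_randomizer_def by (metis measure_pmf_single)+
  have "(\<Sum>x'\<in>{x}. pmf (R x') y) / card {x} \<le> (\<Sum>x'\<in>{1..d}. exp eps * pmf (R x') y) / card {1..d}"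
    "(\<Sum>x'\<in>{1..d}. pmf (R x') y) / card {1..d} \<le> (\<Sum>x'\<in>{x}. exp eps * pmf (R x') y) / card {x}"
    using assms(2) single by (intro average_le_average; auto)+
  then show "pmf (R x) y \<le> exp eps * pmf (rand_out {1..d} R) y"
    and "pmf (rand_out {1..d} R) y \<le> exp eps * pmf (R x) y"
    using assms(2) by (auto simp: pmf_rand_out sum_distrib_left[symmetric])
qed

section \<open>Leaky messages\<close>

lemma abs_ln_le_if_near_one:
  fixes r v :: real
  assumes "\<bar>r - 1\<bar> < v / 2" "v \<le> 1"
  shows "r > 0" "\<bar>ln r\<bar> \<le> v"
proof -
  have r: "r > 1/2"
    using assms by linarith
  then show "r > 0"
    by simp
  have "ln r \<le> r - 1"
    using r by (intro ln_le_minus_one) simp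
  moreover have "- ln r \<le> 1 / r - 1"
    using ln_le_minus_one[of "1 / r"] r by (simp add: ln_div)
  moreover have "1 / r - 1 \<le> v"
  proof -
    have "v * (1/2) \<le> v * r"
      using r assms(1) abs_ge_zero[of "r - 1"] by (intro mult_left_mono) linarith+
    then have "1 - r \<le> v * r"
      using assms by linarith
    then show ?thesis
      using r by (simp add: field_simps)
  qed
  ultimately show "\<bar>ln r\<bar> \<le> v"
    using assms by linarith
qed

lemma not_Leak_if_balanced:
  fixes R :: "nat \<Rightarrow> 'y pmf" and d :: nat and y :: 'y
  defines "P \<equiv> pmf (rand_out {1..d} R) y"
  assumes "H \<subseteq> {1..d}" "card H = k" "k > 0" "P > 0" "v \<le> 1"
    and balanced: "\<bar>(\<Sum>x\<in>H. pmf (R x) y / P) - k\<bar> < k * v / 2"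
  shows "y \<notin> Leak v d H R"
proof -
  define r where "r = (\<Sum>x\<in>H. pmf (R x) y / P) / k"
  have "\<bar>r - 1\<bar> = \<bar>(\<Sum>x\<in>H. pmf (R x) y / P) - k\<bar> / k"
    using assms(4) by (simp add: r_def field_simps)
  also have "\<dots> < v / 2"
    using balanced assms(4) by (simp add: divide_less_eq mult.commute)
  finally have "\<bar>r - 1\<bar> < v / 2" .
  then have "r > 0" "\<bar>ln r\<bar> \<le> v"
    using abs_ln_le_if_near_one assms(6) by auto
  moreover have "finite H" "H \<noteq> {}"
    using assms(2-4) finite_subset by auto
  then have "pmf (rand_out H R) y / P = r"
    using assms(3) by (simp add: pmf_rand_out r_def sum_divide_distrib mult.commute)
  ultimately show ?thesis
    by (auto simp: Leak_def P_def)
qed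

lemma set_pmf_of_set_subsets_card:
  assumes "finite A" "k \<le> card A"
  shows "set_pmf (pmf_of_set {H. H \<subseteq> A \<and> card H = k}) = {H. H \<subseteq> A \<and> card H = k}"
proof -
  obtain H where "H \<subseteq> A" "card H = k"
    using obtain_subset_with_card_n[OF assms(2)] by blast
  moreover have "finite {H. H \<subseteq> A \<and> card H = k}"
    using assms(1) by (auto intro: finite_subset[of _ "Pow A"])
  ultimately show ?thesis
    by (intro set_pmf_of_set) auto
qed

lemma private_randomizer_weights:
  fixes R :: "nat \<Rightarrow> 'y::countable pmf" and d :: nat and y :: 'y
  defines "P \<equiv> pmf (rand_out {1..d} R) y"
  assumes "private_randomizer eps d R" "d > 0" "P > 0"
  shows "\<forall>x\<in>{1..d}. pmf (R x) y / P \<in> {exp (-eps)..exp eps}"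
    and "(\<Sum>x\<in>{1..d}. pmf (R x) y / P) = d"
proof -
  show "\<forall>x\<in>{1..d}. pmf (R x) y / P \<in> {exp (-eps)..exp eps}"
    using private_randomizer_pmf_rand_out[OF assms(2)] assms(4)
    by (auto simp: P_def exp_minus field_simps)
  have "(\<Sum>x\<in>{1..d}. pmf (R x) y) = P * real d"
    using pmf_rand_out[of "{1..d}" R y] assms(3) by (simp add: P_def)
  then show "(\<Sum>x\<in>{1..d}. pmf (R x) y / P) = d"
    using assms(4) by (simp add: sum_divide_distrib[symmetric])
qed

lemma measure_Leak_le:
  assumes priv: "private_randomizer eps d R" and "eps > 0" "even d" "d > 0" "0 \<le> v" "v \<le> 1"
    and bound: "2 * exp (- (real d * v\<^sup>2) / (4 * (exp eps - exp (-eps))\<^sup>2)) \<le> beta"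
  shows "measure_pmf.prob (pmf_of_set {H. H \<subseteq> {1..d} \<and> card H = d div 2})
           {H. y \<in> Leak v d H R} \<le> beta"
proof (cases "pmf (rand_out {1..d} R) y = 0")
  case True
  moreover have "beta \<ge> 0"
    by (rule order_trans[OF _ bound]) simp
  ultimately show ?thesis
    by (simp add: Leak_def)
next
  case False
  define P where "P = pmf (rand_out {1..d} R) y"
  define a where "a x = pmf (R x) y / P" for x
  define k where "k = d div 2"
  have k: "k > 0" "d = 2 * k"
    using assms(3,4) by (auto simp: k_def)
  have "P > 0"
    using False by (simp add: P_def order_less_le)
  note weights = private_randomizer_weights[OF priv \<open>d > 0\<close>, of y, folded P_def a_def]
  have "k * v / 2 \<le> \<bar>(\<Sum>x\<in>H. a x) - (\<Sum>x\<in>{1..d}. a x) / 2\<bar>"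
    if "H \<subseteq> {1..d}" "card H = k" "y \<in> Leak v d H R" for H
  proof -
    have "\<not> \<bar>(\<Sum>x\<in>H. pmf (R x) y / P) - k\<bar> < k * v / 2"
      using not_Leak_if_balanced[of H d k R y v] that k(1) \<open>P > 0\<close> \<open>v \<le> 1\<close> by (auto simp: P_def)
    then show ?thesis
      using weights(2) \<open>P > 0\<close> k(2) by (simp add: a_def not_less)
  qed
  then have "measure_pmf.prob (pmf_of_set {H. H \<subseteq> {1..d} \<and> card H = k}) {H. y \<in> Leak v d H R}
      \<le> measure_pmf.prob (pmf_of_set {H. H \<subseteq> {1..d} \<and> card H = k})
          {H. \<bar>(\<Sum>x\<in>H. a x) - (\<Sum>x\<in>{1..d}. a x) / 2\<bar> \<ge> k * v / 2}"
    using k by (intro measure_pmf.finite_measure_mono_AE) (auto simp: AE_measure_pmf_iff set_pmf_of_set_subsets_card)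
  also have "\<dots> \<le> 2 * exp (- 2 * (k * v / 2)\<^sup>2 / (real k * (exp eps - exp (-eps))\<^sup>2))"
    using k weights(1) \<open>P > 0\<close> assms(2,5) by (intro half_subset_sum_concentration) auto
  also have "- 2 * (k * v / 2)\<^sup>2 / (real k * u) = - (real d * v\<^sup>2) / (4 * u)" for u :: real
    using k by (cases "u = 0") (simp_all add: power2_eq_square field_simps)
  finally show ?thesis
    using bound by (simp add: k_def)
qed

lemma expectation_measure_le_if_sections_le:
  fixes p :: "'a pmf" and q :: "'b pmf" and S :: "'a \<Rightarrow> 'b set"
  assumes "\<And>y. measure_pmf.prob p {x. y \<in> S x} \<le> b" "b \<ge> 0"
  shows "measure_pmf.expectation p (\<lambda>x. measure_pmf.prob q (S x)) \<le> b"
proof -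
  have "integrable (measure_pmf p) (\<lambda>x. measure_pmf.prob q (S x))"
    by (rule measure_pmf.integrable_const_bound[where B=1]) auto
  then have "ennreal (measure_pmf.expectation p (\<lambda>x. measure_pmf.prob q (S x)))
      = (\<integral>\<^sup>+x. \<integral>\<^sup>+y. indicator {(x, y). y \<in> S x} (x, y) \<partial>measure_pmf q \<partial>measure_pmf p)"
    by (simp add: nn_integral_eq_integral[symmetric] measure_pmf.emeasure_eq_measure[symmetric]
        indicator_def flip: nn_integral_indicator)
  also have "\<dots> = (\<integral>\<^sup>+z. indicator {(x, y). y \<in> S x} z \<partial>measure_pmf (pair_pmf p q))"
    by (rule nn_integral_pair_pmf'[symmetric])
  also have "\<dots> = (\<integral>\<^sup>+z. indicator {(x, y). y \<in> S x} (snd z, fst z) \<partial>measure_pmf (pair_pmf q p))"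
    by (subst pair_commute_pmf) (simp add: split_beta)
  also have "\<dots> = (\<integral>\<^sup>+y. ennreal (measure_pmf.prob p {x. y \<in> S x}) \<partial>measure_pmf q)"
    by (simp add: nn_integral_pair_pmf' measure_pmf.emeasure_eq_measure[symmetric] indicator_def
        flip: nn_integral_indicator)
  also have "\<dots> \<le> (\<integral>\<^sup>+y. ennreal b \<partial>measure_pmf q)"
    by (intro nn_integral_mono ennreal_leI assms(1))
  finally show ?thesis
    using assms(2) by simp
qed

lemma measure_pmf_all_less_ge:
  fixes p :: "'a pmf" and f :: "'i \<Rightarrow> 'a \<Rightarrow> real" and b c :: real
  assumes "finite I" "c > 0"
    and "\<And>i x. i \<in> I \<Longrightarrow> 0 \<le> f i x" "\<And>i. i \<in> I \<Longrightarrow> integrable (measure_pmf p) (f i)"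
    and "\<And>i. i \<in> I \<Longrightarrow> measure_pmf.expectation p (f i) \<le> b"
  shows "1 - card I * b / c \<le> measure_pmf.prob p {x. \<forall>i\<in>I. f i x < c}"
proof -
  have Markov: "measure_pmf.prob p {x. c \<le> f i x} \<le> b / c" if "i \<in> I" for i
  proof -
    have "measure_pmf.prob p {x \<in> space p. c \<le> f i x} \<le> measure_pmf.expectation p (f i) / c"
      using assms(2-4) that by (intro integral_Markov_inequality_measure[where A = UNIV]) auto
    also have "\<dots> \<le> b / c"
      using assms(2,5) that by (simp add: divide_right_mono)
    finally show ?thesis
      by simp
  qed
  have "measure_pmf.prob p (\<Union>i\<in>I. {x. c \<le> f i x}) \<le> (\<Sum>i\<in>I. measure_pmf.prob p {x. c \<le> f i x})"
    using assms(1) by (intro measure_pmf.finite_measure_subadditive_finite) auto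
  also have "\<dots> \<le> card I * (b / c)"
    using Markov by (intro sum_bounded_above) auto
  moreover have "{x. \<forall>i\<in>I. f i x < c} = space p - (\<Union>i\<in>I. {x. c \<le> f i x})"
    by (auto simp: not_le)
  ultimately show ?thesis
    by (simp add: measure_pmf.prob_compl del: space_measure_pmf)
qed

lemma exp_minus_exp_uminus_le:
  assumes "eps \<ge> (0::real)"
  shows "exp eps - exp (-eps) \<le> exp (2 * eps) - 1"
proof -
  have "exp eps - exp (-eps) = (exp (2 * eps) - 1) * exp (-eps)"
    by (simp add: algebra_simps flip: exp_add)
  also have "\<dots> \<le> (exp (2 * eps) - 1) * 1"
    using assms by (intro mult_left_mono) auto
  finally show ?thesis
    by simp
qed

lemma leak_threshold_bounds:
  fixes eps beta v :: real
  assumes "eps > 0" "0 < beta" "beta < 1"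
    and d: "real d > 4 * (exp (2 * eps) - 1)\<^sup>2 * ln (2 / beta)"
    and v: "v = (exp (2 * eps) - 1) * sqrt (4 / real d * ln (2 / beta))"
  shows "d > 0" "0 \<le> v" "v \<le> 1"
    and "2 * exp (- (real d * v\<^sup>2) / (4 * (exp eps - exp (-eps))\<^sup>2)) \<le> beta"
proof -
  define w where "w = exp (2 * eps) - 1"
  define L where "L = ln (2 / beta)"
  define u where "u = exp eps - exp (-eps)"
  have "w > 0" "L > 0" "u > 0"
    using assms(1-3) by (simp_all add: w_def L_def u_def)
  moreover have "u \<le> w"
    using exp_minus_exp_uminus_le assms(1) by (simp add: u_def w_def)
  ultimately have "u\<^sup>2 \<le> w\<^sup>2"
    by (simp add: power_mono)
  from d have "real d > 4 * w\<^sup>2 * L"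
    by (simp add: w_def L_def)
  moreover have "4 * w\<^sup>2 * L > 0"
    using \<open>w > 0\<close> \<open>L > 0\<close> by simp
  ultimately have "real d > 0"
    by linarith
  then show "d > 0"
    by simp
  then have dv: "real d * v\<^sup>2 = 4 * w\<^sup>2 * L"
    using \<open>L > 0\<close> by (simp add: v w_def L_def power_mult_distrib)
  show "0 \<le> v"
    using \<open>w > 0\<close> \<open>L > 0\<close> by (simp add: v w_def L_def)
  have "real d * v\<^sup>2 < real d * 1"
    using dv \<open>real d > 4 * w\<^sup>2 * L\<close> by simp
  then have "v\<^sup>2 < 1\<^sup>2"
    using \<open>d > 0\<close> by (simp only: mult_less_cancel_left_pos of_nat_0_less_iff) simp
  then show "v \<le> 1"
    using \<open>0 \<le> v\<close> by (simp add: power_less_imp_less_base less_imp_le)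
  have "L \<le> w\<^sup>2 * L / u\<^sup>2"
    using \<open>u\<^sup>2 \<le> w\<^sup>2\<close> \<open>L > 0\<close> \<open>u > 0\<close> by (simp add: le_divide_eq mult.commute mult_left_mono)
  then have "exp (- (real d * v\<^sup>2) / (4 * u\<^sup>2)) \<le> exp (- L)"
    by (simp add: dv)
  also have "exp (- L) = beta / 2"
    using assms(2) by (simp add: L_def exp_minus)
  finally show "2 * exp (- (real d * v\<^sup>2) / (4 * (exp eps - exp (-eps))\<^sup>2)) \<le> beta"
    by (simp add: u_def)
qed

lemma measure_small_Leak_mass_ge:
  fixes R :: "nat \<Rightarrow> nat \<Rightarrow> 'y::countable pmf"
  assumes "\<forall>i\<in>{1..n}. private_randomizer eps d (R i)" "eps > 0" "even d" "d > 0"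
    and "0 \<le> v" "v \<le> 1" "beta > 0"
    and "2 * exp (- (real d * v\<^sup>2) / (4 * (exp eps - exp (-eps))\<^sup>2)) \<le> beta"
  shows "5 / 6 \<le> measure_pmf.prob (pmf_of_set {H. H \<subseteq> {1..d} \<and> card H = d div 2})
           {H. \<forall>i\<in>{1..n}. measure_pmf.prob (rand_out {1..d} (R i)) (Leak v d H (R i)) < 6 * beta * n}"
proof (cases "n = 0")
  case False
  have "1 - real (card {1..n}) * beta / (6 * beta * n)
          \<le> measure_pmf.prob (pmf_of_set {H. H \<subseteq> {1..d} \<and> card H = d div 2})
               {H. \<forall>i\<in>{1..n}. measure_pmf.prob (rand_out {1..d} (R i)) (Leak v d H (R i)) < 6 * beta * n}"
    using False assms
    by (intro measure_pmf_all_less_ge expectation_measure_le_if_sections_le measure_Leak_le)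
       (auto intro: measure_pmf.integrable_const_bound[where B = 1])
  then show ?thesis
    using False assms(7) by simp
qed simp

theorem mainTheorem8:
  fixes eps beta :: real and d n :: nat and R :: "nat \<Rightarrow> nat \<Rightarrow> 'y::countable pmf"
  assumes "eps > 0" and "0 < beta" and "beta < 1"
    and "even d" and "real d > 4 * (exp (2 * eps) - 1)^2 * ln (2 / beta)"
    and "\<forall>i\<in>{1..n}. private_randomizer eps d (R i)"
  defines "v \<equiv> (exp (2 * eps) - 1) * sqrt (4 / real d * ln (2 / beta))"
  shows "measure_pmf.prob (pmf_of_set {H. H \<subseteq> {1..d} \<and> card H = d div 2})
           {H. (\<forall>i\<in>{1..n}. measure_pmf.prob (rand_out {1..d} (R i)) (Leak v d H (R i))
                               < 6 * beta * real n)
             \<and> (\<forall>i\<in>{1..n}. measure_pmf.prob (rand_out H (R i)) (Leak v d H (R i))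
                               < 6 * exp eps * beta * real n)} \<ge> 5 / 6"
proof -
  note params = leak_threshold_bounds[OF assms(1-3,5) v_def[THEN meta_eq_to_obj_eq]]
  have "5 / 6 \<le> measure_pmf.prob (pmf_of_set {H. H \<subseteq> {1..d} \<and> card H = d div 2})
           {H. \<forall>i\<in>{1..n}. measure_pmf.prob (rand_out {1..d} (R i)) (Leak v d H (R i)) < 6 * beta * n}"
    using assms params by (intro measure_small_Leak_mass_ge) auto
  moreover have "measure_pmf.prob (rand_out H (R i)) (Leak v d H (R i)) < 6 * exp eps * beta * n"
    if "H \<subseteq> {1..d}" "card H = d div 2" "i \<in> {1..n}"
      and "measure_pmf.prob (rand_out {1..d} (R i)) (Leak v d H (R i)) < 6 * beta * n" for H i
  proof -
    have "H \<noteq> {}"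
      using that(2) params(1) assms(4) by auto
    then have "measure_pmf.prob (rand_out H (R i)) (Leak v d H (R i))
                 \<le> exp eps * measure_pmf.prob (rand_out {1..d} (R i)) (Leak v d H (R i))"
      using measure_rand_out_subset_le assms(6) that(1,3) by blast
    also have "\<dots> < exp eps * (6 * beta * n)"
      using that(4) by simp
    finally show ?thesis
      by (simp add: ac_simps)
  qed
  ultimately show ?thesis
    using params(1) assms(4)
    by (elim order_trans, intro measure_pmf.finite_measure_mono_AE)
       (auto simp: AE_measure_pmf_iff set_pmf_of_set_subsets_card)
qed

end
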